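(* Let $X$ be a Baire space and let $Y$ be a first countable topological space such that the strong Choquet game $Ch(Y)$ is $\beta$-unfavorable. Then $X\times Y$ is a Baire space.
   Context: A topological space is a Baire space if every countable intersection of dense open subsets is dense. The strong Choquet game $Ch(Y)$: two players $\beta$ and $\alpha$ alternate, $\beta$ moving first; at round $n$, $\beta$ chooses a point $x_n$ and an open set $V_n$ with $x_n\in V_n$ (and $V_n\subseteq U_{n-1}$ for $n\ge1$), then $\alpha$ chooses an open set $U_n$ with $x_n\in U_n\subseteq V_n$. Player $\alpha$ wins the play if $\bigcap_n U_n\neq\emptyset$; otherwise $\beta$ wins. A strategy for a player is a function assigning a legal move to each finite sequence of the opponent's previous moves; it is winning if the player wins every play compatible with it. $Ch(Y)$ is $\beta$-unfavorable if $\beta$ has no winning strategy. *)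

theory Defs
  imports "HOL-Analysis.Analysis"
begin

text \<open>Baire space: every countable intersection of dense open subsets is dense.
  (Intersection taken inside the topspace, so the empty family gives the whole space.)\<close>
definition baire_space :: "'a topology \<Rightarrow> bool" where
  "baire_space X \<longleftrightarrow>
     (\<forall>\<U>. countable \<U> \<and> (\<forall>U\<in>\<U>. openin X U \<and> X closure_of U = topspace X)
        \<longrightarrow> X closure_of (topspace X \<inter> \<Inter>\<U>) = topspace X)"

text \<open>A strategy for beta maps the finite list [U_0,...,U_(n-1)]
  of alpha's previous moves to beta's move (x_n, V_n).\<close>
definition choquet_compatible ::
  "'a topology \<Rightarrow> ('a set list \<Rightarrow> 'a \<times> 'a set) \<Rightarrow> (nat \<Rightarrow> 'a set) \<Rightarrow> nat \<Rightarrow> bool" where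
  "choquet_compatible Y \<sigma> U n \<longleftrightarrow>
     (\<forall>k<n. openin Y (U k) \<and> fst (\<sigma> (map U [0..<k])) \<in> U k
            \<and> U k \<subseteq> snd (\<sigma> (map U [0..<k])))"

definition beta_winning_strategy ::
  "'a topology \<Rightarrow> ('a set list \<Rightarrow> 'a \<times> 'a set) \<Rightarrow> bool" where
  "beta_winning_strategy Y \<sigma> \<longleftrightarrow>
     (\<forall>U n. choquet_compatible Y \<sigma> U n \<longrightarrow>
        openin Y (snd (\<sigma> (map U [0..<n])))
        \<and> fst (\<sigma> (map U [0..<n])) \<in> snd (\<sigma> (map U [0..<n]))
        \<and> (\<forall>m. n = Suc m \<longrightarrow> snd (\<sigma> (map U [0..<n])) \<subseteq> U m))
   \<and> (\<forall>U. (\<forall>n. choquet_compatible Y \<sigma> U n) \<longrightarrow> (\<Inter>n. U n) = {})"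

definition strong_choquet_beta_unfavorable :: "'a topology \<Rightarrow> bool" where
  "strong_choquet_beta_unfavorable Y \<longleftrightarrow> \<not> (\<exists>\<sigma>. beta_winning_strategy Y \<sigma>)"

end

theory Submission
  imports Defs
begin

text \<open>Given dense open sets \<open>W\<^sub>n\<close> of \<open>X \<times> Y\<close> and a nonempty open box \<open>A \<times> B\<close>, build a tree,
  indexed by finite sequences of naturals, of disjoint families of open boxes \<open>G \<times> V\<close>, each
  carrying a point \<open>y \<in> V\<close>: at depth \<open>n\<close> the boxes lie in \<open>W\<^sub>n\<close>, their \<open>X\<close>-sides are disjoint
  with union dense in \<open>A\<close>, and the children of a box with label \<open>k\<close> have \<open>X\<close>-sides inside
  its own and \<open>Y\<close>-sides inside the \<open>k\<close>-th basic neighbourhood of its point. Countably many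
  dense open sets of \<open>X\<close> arise, so the Baire property yields \<open>x \<in> A\<close> lying in exactly one box
  per node. Along these boxes \<beta> has a strategy in the strong Choquet game of \<open>Y\<close>: answer
  \<alpha>'s move \<open>U\<close> by the child indexed by a basic neighbourhood inside \<open>U\<close>. As it is not
  winning, some play has a common point \<open>z\<close>, and then \<open>(x, z)\<close> lies in \<open>A \<times> B\<close> and every \<open>W\<^sub>n\<close>.\<close>

lemma baire_space_meets_Inter:
  fixes E :: "'i::countable \<Rightarrow> 'a set"
  assumes "baire_space X"
    and "\<And>i. openin X (E i)" "\<And>i. X closure_of E i = topspace X"
    and "openin X A" "A \<noteq> {}"
  obtains x where "x \<in> A" "\<And>i. x \<in> E i"
proof -
  have "\<forall>U\<in>range E. openin X U \<and> X closure_of U = topspace X"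
    using assms(2,3) by blast
  then have "X closure_of (topspace X \<inter> \<Inter>(range E)) = topspace X"
    using assms(1) unfolding baire_space_def by simp
  then have "topspace X \<inter> \<Inter>(range E) \<inter> A \<noteq> {}"
    using assms(4,5) by (simp add: dense_intersects_open)
  then show thesis
    using that by blast
qed

lemma baire_spaceI:
  assumes "\<And>W T. (\<And>n::nat. openin X (W n)) \<Longrightarrow> (\<And>n. X closure_of W n = topspace X) \<Longrightarrow>
             openin X T \<Longrightarrow> T \<noteq> {} \<Longrightarrow> \<exists>x\<in>T. \<forall>n. x \<in> W n"
  shows "baire_space X"
  unfolding baire_space_def
proof (intro allI impI)
  fix \<U> assume \<U>: "countable \<U> \<and> (\<forall>U\<in>\<U>. openin X U \<and> X closure_of U = topspace X)"
  show "X closure_of (topspace X \<inter> \<Inter>\<U>) = topspace X"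
  proof (cases "\<U> = {}")
    case True
    then show ?thesis
      by simp
  next
    case False
    then have range: "range (from_nat_into \<U>) = \<U>"
      using \<U> by (simp add: range_from_nat_into)
    have W: "openin X (from_nat_into \<U> n)" "X closure_of (from_nat_into \<U> n) = topspace X" for n
      using \<U> from_nat_into[OF False] by blast+
    have "topspace X \<inter> \<Inter>\<U> \<inter> T \<noteq> {}" if T: "openin X T" "T \<noteq> {}" for T
    proof -
      obtain x where "x \<in> T" "\<And>n. x \<in> from_nat_into \<U> n"
        using assms[of "from_nat_into \<U>", OF W T] by blast
      moreover have "x \<in> topspace X"
        using \<open>x \<in> T\<close> openin_subset[OF \<open>openin X T\<close>] by blast
      ultimately show ?thesis
        using range by blast
    qed
    then show ?thesis
      by (simp add: dense_intersects_open)
  qed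
qed

lemma dense_Un_exterior:
  assumes "openin X G" "openin X A"
    and meets: "\<And>P. openin X P \<Longrightarrow> P \<noteq> {} \<Longrightarrow> P \<subseteq> A \<Longrightarrow> G \<inter> P \<noteq> {}"
  shows "X closure_of (G \<union> (topspace X - X closure_of A)) = topspace X"
  unfolding dense_intersects_open
proof (intro allI impI)
  fix T assume T: "openin X T \<and> T \<noteq> {}"
  show "(G \<union> (topspace X - X closure_of A)) \<inter> T \<noteq> {}"
  proof (cases "T \<inter> A = {}")
    case True
    then have "T \<inter> X closure_of A = {}"
      using T openin_Int_closure_of_eq_empty by blast
    then show ?thesis
      using T openin_subset by fastforce
  next
    case False
    then have "G \<inter> (T \<inter> A) \<noteq> {}"
      using T assms(2) meets by blast
    then show ?thesis
      by blast
  qed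
qed

lemma first_countable_open_neighbourhood_base:
  assumes "first_countable Y" "y \<in> topspace Y"
  obtains \<B> where "countable \<B>" "\<B> \<noteq> {}" "\<And>V. V \<in> \<B> \<Longrightarrow> openin Y V \<and> y \<in> V"
    "\<And>U. openin Y U \<Longrightarrow> y \<in> U \<Longrightarrow> \<exists>V\<in>\<B>. V \<subseteq> U"
proof -
  obtain \<B> where \<B>: "countable \<B>" "\<forall>V\<in>\<B>. openin Y V"
    "\<forall>U. openin Y U \<and> y \<in> U \<longrightarrow> (\<exists>V\<in>\<B>. y \<in> V \<and> V \<subseteq> U)"
    using assms unfolding first_countable_def by metis
  show thesis
  proof (rule that[of "{V\<in>\<B>. y \<in> V}"])
    show "countable {V\<in>\<B>. y \<in> V}"
      using \<B>(1) by simp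
    show "{V\<in>\<B>. y \<in> V} \<noteq> {}"
      using \<B>(3) assms(2) by blast
  qed (use \<B> in blast)+
qed

lemma first_countable_nat_neighbourhoods:
  assumes "first_countable Y"
  obtains nb :: "'b \<Rightarrow> nat \<Rightarrow> 'b set"
  where "\<And>y k. y \<in> topspace Y \<Longrightarrow> openin Y (nb y k)"
    and "\<And>y k. y \<in> topspace Y \<Longrightarrow> y \<in> nb y k"
    and "\<And>y U. openin Y U \<Longrightarrow> y \<in> U \<Longrightarrow> \<exists>k. nb y k \<subseteq> U"
proof -
  have "\<forall>y\<in>topspace Y. \<exists>\<B>. countable \<B> \<and> \<B> \<noteq> {} \<and> (\<forall>V\<in>\<B>. openin Y V \<and> y \<in> V)
          \<and> (\<forall>U. openin Y U \<and> y \<in> U \<longrightarrow> (\<exists>V\<in>\<B>. V \<subseteq> U))"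
    using first_countable_open_neighbourhood_base[OF assms] by (metis (no_types, lifting))
  then obtain \<B> where \<B>: "\<forall>y\<in>topspace Y. countable (\<B> y) \<and> \<B> y \<noteq> {}
      \<and> (\<forall>V\<in>\<B> y. openin Y V \<and> y \<in> V) \<and> (\<forall>U. openin Y U \<and> y \<in> U \<longrightarrow> (\<exists>V\<in>\<B> y. V \<subseteq> U))"
    by (rule bchoice[THEN exE]) blast
  show thesis
  proof (rule that[of "\<lambda>y. from_nat_into (\<B> y)"])
    fix y k assume y: "y \<in> topspace Y"
    then have "from_nat_into (\<B> y) k \<in> \<B> y"
      using \<B> by (simp add: from_nat_into)
    then show "openin Y (from_nat_into (\<B> y) k)" "y \<in> from_nat_into (\<B> y) k"
      using \<B> y by blast+
  next
    fix y U assume U: "openin Y U" "y \<in> U"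
    then have y: "y \<in> topspace Y"
      using openin_subset by blast
    then obtain V where "V \<in> \<B> y" "V \<subseteq> U"
      using \<B> U by blast
    moreover have "countable (\<B> y)"
      using \<B> y by blast
    ultimately show "\<exists>k. from_nat_into (\<B> y) k \<subseteq> U"
      by (metis from_nat_into_surj)
  qed
qed

lemma dense_openin_prod_contains_box:
  assumes "openin (prod_topology X Y) W" "prod_topology X Y closure_of W = topspace (prod_topology X Y)"
    and "openin X P" "P \<noteq> {}" "openin Y T" "T \<noteq> {}"
  obtains G y V where "openin X G" "G \<noteq> {}" "G \<subseteq> P" "openin Y V" "y \<in> V" "V \<subseteq> T" "G \<times> V \<subseteq> W"
proof -
  have PT: "openin (prod_topology X Y) (P \<times> T)"
    using assms(3,5) by (simp add: openin_prod_Times_iff)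
  moreover have "P \<times> T \<noteq> {}"
    using assms(4,6) by simp
  ultimately have "W \<inter> (P \<times> T) \<noteq> {}"
    using assms(2) unfolding dense_intersects_open by blast
  then obtain a b where ab: "(a, b) \<in> W \<inter> (P \<times> T)"
    by auto
  moreover have "openin (prod_topology X Y) (W \<inter> (P \<times> T))"
    using assms(1) PT by blast
  ultimately obtain G V where "openin X G" "openin Y V" "a \<in> G" "b \<in> V" "G \<times> V \<subseteq> W \<inter> (P \<times> T)"
    by (metis openin_prod_topology_alt)
  then show thesis
    using that[of G V b] by blast
qed

lemma exists_maximal_disjoint_subfamily:
  fixes f :: "'c \<Rightarrow> 'a set"
  assumes inside: "\<And>P. P \<in> \<P> \<Longrightarrow> \<exists>c\<in>S. f c \<subseteq> P"
    and nonempty: "\<And>c. c \<in> S \<Longrightarrow> f c \<noteq> {}"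
  obtains F where "F \<subseteq> S" "pairwise (\<lambda>c c'. disjnt (f c) (f c')) F"
    "\<And>P. P \<in> \<P> \<Longrightarrow> \<Union>(f ` F) \<inter> P \<noteq> {}"
proof -
  define \<A> where "\<A> = {F. F \<subseteq> S \<and> pairwise (\<lambda>c c'. disjnt (f c) (f c')) F}"
  have "\<Union>\<C> \<in> \<A>" if "\<C> \<in> chains \<A>" for \<C>
  proof -
    have "\<C> \<subseteq> \<A>" "chain\<^sub>\<subseteq> \<C>"
      using that by (simp_all add: chains_def)
    then show ?thesis
      unfolding \<A>_def by (blast intro: pairwise_chain_Union)
  qed
  then obtain M where M: "M \<in> \<A>" and max: "\<And>F. F \<in> \<A> \<Longrightarrow> M \<subseteq> F \<Longrightarrow> F = M"
    using Zorn_Lemma[of \<A>] by blast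
  have "\<Union>(f ` M) \<inter> P \<noteq> {}" if P: "P \<in> \<P>" for P
  proof
    assume disj: "\<Union>(f ` M) \<inter> P = {}"
    obtain c where c: "c \<in> S" "f c \<subseteq> P"
      using inside[OF P] by blast
    then have "c \<notin> M"
      using disj nonempty by blast
    moreover have "pairwise (\<lambda>c c'. disjnt (f c) (f c')) (insert c M)"
      using M c(2) disj unfolding \<A>_def pairwise_insert disjnt_def by blast
    then have "insert c M \<in> \<A>"
      using M c(1) unfolding \<A>_def by blast
    ultimately show False
      using max by blast
  qed
  then show thesis
    using M that unfolding \<A>_def by blast
qed

text \<open>A cell is an open set tagged with data of type \<open>'d\<close>; disjointness and density only
  concern the open sets.\<close>

definition disjoint_dense_in :: "'a topology \<Rightarrow> 'a set \<Rightarrow> ('a set \<times> 'd) set \<Rightarrow> bool" where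
  "disjoint_dense_in X Q F \<longleftrightarrow>
     (\<forall>c\<in>F. openin X (fst c) \<and> fst c \<noteq> {} \<and> fst c \<subseteq> Q)
     \<and> pairwise (\<lambda>c c'. disjnt (fst c) (fst c')) F
     \<and> (\<forall>P. openin X P \<and> P \<noteq> {} \<and> P \<subseteq> Q \<longrightarrow> \<Union>(fst ` F) \<inter> P \<noteq> {})"

lemma exists_disjoint_dense_in:
  assumes "\<And>P. openin X P \<Longrightarrow> P \<noteq> {} \<Longrightarrow> P \<subseteq> Q \<Longrightarrow>
             \<exists>G d. openin X G \<and> G \<noteq> {} \<and> G \<subseteq> P \<and> S (G, d)"
  obtains F where "disjoint_dense_in X Q F" "\<And>c. c \<in> F \<Longrightarrow> S c"
proof -
  define \<P> where "\<P> = {P. openin X P \<and> P \<noteq> {} \<and> P \<subseteq> Q}"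
  define cells where "cells = {c. openin X (fst c) \<and> fst c \<noteq> {} \<and> fst c \<subseteq> Q \<and> S c}"
  have inside: "\<exists>c\<in>cells. fst c \<subseteq> P" if P: "P \<in> \<P>" for P
  proof -
    have "openin X P" "P \<noteq> {}" "P \<subseteq> Q"
      using P unfolding \<P>_def by blast+
    moreover obtain G d where "openin X G" "G \<noteq> {}" "G \<subseteq> P" "S (G, d)"
      using assms[OF calculation] by auto
    ultimately show ?thesis
      unfolding cells_def by (intro bexI[of _ "(G, d)"]) auto
  qed
  have nonempty: "fst c \<noteq> {}" if "c \<in> cells" for c
    using that unfolding cells_def by blast
  obtain F where F: "F \<subseteq> cells" "pairwise (\<lambda>c c'. disjnt (fst c) (fst c')) F"
    "\<And>P. P \<in> \<P> \<Longrightarrow> \<Union>(fst ` F) \<inter> P \<noteq> {}"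
    using exists_maximal_disjoint_subfamily[OF inside nonempty] by blast
  have "disjoint_dense_in X Q F"
    unfolding disjoint_dense_in_def
  proof (intro conjI)
    show "\<forall>c\<in>F. openin X (fst c) \<and> fst c \<noteq> {} \<and> fst c \<subseteq> Q"
      using F(1) unfolding cells_def by blast
    show "\<forall>P. openin X P \<and> P \<noteq> {} \<and> P \<subseteq> Q \<longrightarrow> \<Union>(fst ` F) \<inter> P \<noteq> {}"
      using F(3) unfolding \<P>_def by blast
  qed (fact F(2))
  moreover have "S c" if "c \<in> F" for c
    using F(1) that unfolding cells_def by blast
  ultimately show thesis
    using that by blast
qed

lemma disjoint_dense_in_UN:
  assumes F: "disjoint_dense_in X Q F"
    and K: "\<And>C. C \<in> F \<Longrightarrow> disjoint_dense_in X (fst C) (K C)"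
  shows "disjoint_dense_in X Q (\<Union>C\<in>F. K C)"
proof -
  have dense: "\<forall>P. openin X P \<and> P \<noteq> {} \<and> P \<subseteq> Q \<longrightarrow> \<Union>(fst ` (\<Union>C\<in>F. K C)) \<inter> P \<noteq> {}"
  proof (intro allI impI)
    fix P assume P: "openin X P \<and> P \<noteq> {} \<and> P \<subseteq> Q"
    obtain C where C: "C \<in> F" "fst C \<inter> P \<noteq> {}"
      using F P unfolding disjoint_dense_in_def by blast
    then have "openin X (fst C \<inter> P)"
      using F P unfolding disjoint_dense_in_def by blast
    then have "\<Union>(fst ` K C) \<inter> (fst C \<inter> P) \<noteq> {}"
      using K[OF C(1)] C(2) by (simp add: disjoint_dense_in_def)
    then show "\<Union>(fst ` (\<Union>C\<in>F. K C)) \<inter> P \<noteq> {}"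
      using C(1) by blast
  qed
  have disjoint: "disjnt (fst c) (fst c')"
    if "C \<in> F" "c \<in> K C" "C' \<in> F" "c' \<in> K C'" "c \<noteq> c'" for C C' c c'
  proof (cases "C = C'")
    case True
    then show ?thesis
      using K[OF that(1)] that unfolding disjoint_dense_in_def pairwise_def by blast
  next
    case False
    then have "disjnt (fst C) (fst C')"
      using F that unfolding disjoint_dense_in_def pairwise_def by blast
    moreover have "fst c \<subseteq> fst C" "fst c' \<subseteq> fst C'"
      using K[OF that(1)] K[OF that(3)] that unfolding disjoint_dense_in_def by blast+
    ultimately show ?thesis
      by (auto simp: disjnt_def)
  qed
  have cells: "openin X (fst c) \<and> fst c \<noteq> {} \<and> fst c \<subseteq> Q" if "C \<in> F" "c \<in> K C" for C c
  proof -
    have "fst C \<subseteq> Q"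
      using F that(1) unfolding disjoint_dense_in_def by blast
    moreover have "openin X (fst c) \<and> fst c \<noteq> {} \<and> fst c \<subseteq> fst C"
      using K[OF that(1)] that(2) unfolding disjoint_dense_in_def by blast
    ultimately show ?thesis
      by blast
  qed
  show ?thesis
    unfolding disjoint_dense_in_def
  proof (intro conjI)
    show "\<forall>c\<in>(\<Union>C\<in>F. K C). openin X (fst c) \<and> fst c \<noteq> {} \<and> fst c \<subseteq> Q"
      using cells by blast
    show "pairwise (\<lambda>c c'. disjnt (fst c) (fst c')) (\<Union>C\<in>F. K C)"
      unfolding pairwise_def using disjoint by blast
  qed (fact dense)
qed

lemma exists_disjoint_dense_tree:
  fixes ok :: "nat list \<Rightarrow> 'a set \<times> 'd \<Rightarrow> bool" and R :: "nat \<Rightarrow> 'd \<Rightarrow> 'd \<Rightarrow> bool"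
  assumes root: "\<And>P. openin X P \<Longrightarrow> P \<noteq> {} \<Longrightarrow> P \<subseteq> A \<Longrightarrow>
                   \<exists>G d. openin X G \<and> G \<noteq> {} \<and> G \<subseteq> P \<and> ok [] (G, d)"
    and child: "\<And>s k C P. ok s C \<Longrightarrow> openin X P \<Longrightarrow> P \<noteq> {} \<Longrightarrow> P \<subseteq> fst C \<Longrightarrow>
                   \<exists>G d. openin X G \<and> G \<noteq> {} \<and> G \<subseteq> P \<and> ok (k # s) (G, d) \<and> R k (snd C) d"
  obtains F where "\<And>s. disjoint_dense_in X A (F s)" "\<And>s c. c \<in> F s \<Longrightarrow> ok s c"
    "\<And>s k c. c \<in> F (k # s) \<Longrightarrow> \<exists>C\<in>F s. fst c \<subseteq> fst C \<and> R k (snd C) (snd c)"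
proof -
  obtain F0 where F0: "disjoint_dense_in X A F0" "\<And>c. c \<in> F0 \<Longrightarrow> ok [] c"
    using exists_disjoint_dense_in[of X A "ok []"] root by metis
  have children: "\<exists>K. disjoint_dense_in X (fst C) K \<and> (\<forall>c\<in>K. ok (k # s) c \<and> R k (snd C) (snd c))"
    if "ok s C" for s k C
    using exists_disjoint_dense_in[of X "fst C" "\<lambda>c. ok (k # s) c \<and> R k (snd C) (snd c)"]
      child[OF that] by (metis snd_conv)
  define K where "K s k C =
    (SOME K. disjoint_dense_in X (fst C) K \<and> (\<forall>c\<in>K. ok (k # s) c \<and> R k (snd C) (snd c)))" for s k C
  have K: "disjoint_dense_in X (fst C) (K s k C)" "\<And>c. c \<in> K s k C \<Longrightarrow> ok (k # s) c \<and> R k (snd C) (snd c)"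
    if "ok s C" for s k C
    using someI_ex[OF children[OF that, of k]] unfolding K_def by blast+
  define F where "F = rec_list F0 (\<lambda>k s Fs. \<Union>C\<in>Fs. K s k C)"
  have F_Nil: "F [] = F0" and F_Cons: "F (k # s) = (\<Union>C\<in>F s. K s k C)" for k s
    by (simp_all add: F_def)
  have level: "disjoint_dense_in X A (F s) \<and> (\<forall>c\<in>F s. ok s c)" for s
  proof (induction s)
    case Nil
    then show ?case
      using F0 by (simp add: F_Nil)
  next
    case (Cons k s)
    then have "disjoint_dense_in X A (\<Union>C\<in>F s. K s k C)"
      using K(1) by (blast intro: disjoint_dense_in_UN)
    then show ?case
      using Cons K(2) by (auto simp: F_Cons)
  qed
  moreover have "\<exists>C\<in>F s. fst c \<subseteq> fst C \<and> R k (snd C) (snd c)" if c: "c \<in> F (k # s)" for s k c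
  proof -
    obtain C where C: "C \<in> F s" "c \<in> K s k C"
      using c by (auto simp: F_Cons)
    then have "ok s C"
      using level by blast
    then show ?thesis
      using C K[OF \<open>ok s C\<close>] unfolding disjoint_dense_in_def by blast
  qed
  ultimately show thesis
    using that by blast
qed

lemma baire_space_point_in_unique_cells:
  assumes "baire_space X" "openin X A" "A \<noteq> {}"
    and F: "\<And>s::nat list. disjoint_dense_in X A (F s)"
  obtains x where "x \<in> A" "\<And>s. \<exists>!c. c \<in> F s \<and> x \<in> fst c"
proof -
  define E where "E s = \<Union>(fst ` F s) \<union> (topspace X - X closure_of A)" for s
  have open_cells: "openin X (\<Union>(fst ` F s))" for s
    using F[of s] unfolding disjoint_dense_in_def by (intro openin_Union) blast
  have meets: "\<Union>(fst ` F s) \<inter> P \<noteq> {}" if "openin X P" "P \<noteq> {}" "P \<subseteq> A" for s P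
    using F[of s] that unfolding disjoint_dense_in_def by blast
  have E_dense: "X closure_of E s = topspace X" for s
    unfolding E_def using assms(2) meets[where s=s] by (rule dense_Un_exterior[OF open_cells])
  have E_open: "openin X (E s)" for s
    unfolding E_def by (intro openin_Un open_cells openin_diff openin_topspace closedin_closure_of)
  obtain x where x: "x \<in> A" "\<And>s. x \<in> E s"
    using baire_space_meets_Inter[where E=E, OF assms(1) E_open E_dense assms(2,3)] by blast
  have "x \<notin> topspace X - X closure_of A"
    using x(1) closure_of_subset[OF openin_subset[OF assms(2)]] by blast
  then have "\<exists>c\<in>F s. x \<in> fst c" for s
    using x(2)[of s] unfolding E_def by blast
  moreover have "c = c'" if "c \<in> F s" "c' \<in> F s" "x \<in> fst c" "x \<in> fst c'" for s c c'
    using F[of s] that unfolding disjoint_dense_in_def pairwise_def disjnt_def by blast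
  ultimately show thesis
    using that x(1) by blast
qed

lemma baire_space_refining_thread:
  fixes ok :: "nat list \<Rightarrow> 'a set \<times> 'd \<Rightarrow> bool" and R :: "nat \<Rightarrow> 'd \<Rightarrow> 'd \<Rightarrow> bool"
  assumes "baire_space X" "openin X A" "A \<noteq> {}"
    and root: "\<And>P. openin X P \<Longrightarrow> P \<noteq> {} \<Longrightarrow> P \<subseteq> A \<Longrightarrow>
                   \<exists>G d. openin X G \<and> G \<noteq> {} \<and> G \<subseteq> P \<and> ok [] (G, d)"
    and child: "\<And>s k C P. ok s C \<Longrightarrow> openin X P \<Longrightarrow> P \<noteq> {} \<Longrightarrow> P \<subseteq> fst C \<Longrightarrow>
                   \<exists>G d. openin X G \<and> G \<noteq> {} \<and> G \<subseteq> P \<and> ok (k # s) (G, d) \<and> R k (snd C) d"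
  obtains x c where "x \<in> A" "\<And>s. ok s (c s)" "\<And>s. x \<in> fst (c s)"
    "\<And>s k. R k (snd (c s)) (snd (c (k # s)))"
proof -
  obtain F where F: "\<And>s. disjoint_dense_in X A (F s)" "\<And>s c. c \<in> F s \<Longrightarrow> ok s c"
    "\<And>s k c. c \<in> F (k # s) \<Longrightarrow> \<exists>C\<in>F s. fst c \<subseteq> fst C \<and> R k (snd C) (snd c)"
    using root child by (rule exists_disjoint_dense_tree[where X=X and A=A]) (assumption | rule that)+
  obtain x where x: "x \<in> A" "\<And>s. \<exists>!c. c \<in> F s \<and> x \<in> fst c"
    by (rule baire_space_point_in_unique_cells[OF assms(1-3) F(1)]) (rule that)
  define c where "c s = (THE c. c \<in> F s \<and> x \<in> fst c)" for s
  have c: "c s \<in> F s" "x \<in> fst (c s)" for s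
    using theI'[OF x(2)[of s]] unfolding c_def by blast+
  show thesis
  proof (rule that)
    show "x \<in> A"
      by (fact x(1))
    show "ok s (c s)" for s
      using F(2) c(1) by blast
    show "x \<in> fst (c s)" for s
      by (fact c(2))
    show "R k (snd (c s)) (snd (c (k # s)))" for s k
    proof -
      obtain C where "C \<in> F s" "fst (c (k # s)) \<subseteq> fst C" "R k (snd C) (snd (c (k # s)))"
        using F(3) c(1) by blast
      moreover have "C = c s"
        using x(2)[of s] c[of s] calculation(1,2) c(2)[of "k # s"] by blast
      ultimately show ?thesis
        by simp
    qed
  qed
qed

lemma strong_choquet_beta_unfavorable_tree:
  fixes y :: "nat list \<Rightarrow> 'b" and V :: "nat list \<Rightarrow> 'b set"
  assumes "strong_choquet_beta_unfavorable Y"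
    and V: "\<And>s. openin Y (V s)" "\<And>s. y s \<in> V s"
    and refine: "\<And>s U. openin Y U \<Longrightarrow> y s \<in> U \<Longrightarrow> \<exists>k. V (k # s) \<subseteq> U"
  obtains z where "\<And>n. \<exists>s. length s = n \<and> z \<in> V s"
proof -
  (* \<beta> plays the pointed set at the current node, and each move U of \<alpha> advances the node to a
     child whose set lies inside U. *)
  define step where "step s U = (SOME k. V (k # s) \<subseteq> U) # s" for s U
  define node where "node Us = foldl step [] Us" for Us
  define \<sigma> where "\<sigma> Us = (y (node Us), V (node Us))" for Us
  have "length (foldl step s Us) = length s + length Us" for s Us
    by (induction Us arbitrary: s) (simp_all add: step_def)
  then have length_node: "length (node Us) = length Us" for Us
    by (simp add: node_def)
  have node_snoc: "node (Us @ [U]) = step (node Us) U" for Us U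
    by (simp add: node_def)
  have "snd (\<sigma> (map U [0..<Suc m])) \<subseteq> U m" if "choquet_compatible Y \<sigma> U (Suc m)" for U m
  proof -
    define s where "s = node (map U [0..<m])"
    have "openin Y (U m)" "y s \<in> U m"
      using that by (simp_all add: choquet_compatible_def \<sigma>_def s_def)
    then have "V ((SOME k. V (k # s) \<subseteq> U m) # s) \<subseteq> U m"
      using refine by (metis (mono_tags, lifting) someI_ex)
    then show ?thesis
      by (simp add: \<sigma>_def node_snoc step_def s_def)
  qed
  then have legal: "\<forall>U n. choquet_compatible Y \<sigma> U n \<longrightarrow>
        openin Y (snd (\<sigma> (map U [0..<n])))
        \<and> fst (\<sigma> (map U [0..<n])) \<in> snd (\<sigma> (map U [0..<n]))
        \<and> (\<forall>m. n = Suc m \<longrightarrow> snd (\<sigma> (map U [0..<n])) \<subseteq> U m)"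
    using V unfolding \<sigma>_def by auto
  have "\<not> beta_winning_strategy Y \<sigma>"
    using assms(1) unfolding strong_choquet_beta_unfavorable_def by blast
  then have "\<not> (\<forall>U. (\<forall>n. choquet_compatible Y \<sigma> U n) \<longrightarrow> (\<Inter>n. U n) = {})"
    using legal unfolding beta_winning_strategy_def by blast
  then obtain U where U: "\<And>n. choquet_compatible Y \<sigma> U n" "(\<Inter>n. U n) \<noteq> {}"
    by blast
  then obtain z where z: "\<And>n. z \<in> U n"
    by blast
  have "U n \<subseteq> V (node (map U [0..<n]))" for n
    using U(1)[of "Suc n"] by (simp add: choquet_compatible_def \<sigma>_def)
  then show thesis
    using that z length_node by (metis length_map length_upt minus_nat.diff_0 subsetD)
qed

lemma prod_meets_Inter_dense_open:
  fixes X :: "'a topology" and Y :: "'b topology" and W :: "nat \<Rightarrow> ('a \<times> 'b) set"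
  assumes "baire_space X" "first_countable Y" "strong_choquet_beta_unfavorable Y"
    and W: "\<And>n. openin (prod_topology X Y) (W n)"
      "\<And>n. prod_topology X Y closure_of (W n) = topspace (prod_topology X Y)"
    and A: "openin X A" "A \<noteq> {}" and B: "openin Y B" "B \<noteq> {}"
  obtains x z where "x \<in> A" "z \<in> B" "\<And>n. (x, z) \<in> W n"
proof -
  obtain nb :: "'b \<Rightarrow> nat \<Rightarrow> 'b set" where nb_open: "\<And>y k. y \<in> topspace Y \<Longrightarrow> openin Y (nb y k)"
    and nb_mem: "\<And>y k. y \<in> topspace Y \<Longrightarrow> y \<in> nb y k"
    and nb_base: "\<And>y U. openin Y U \<Longrightarrow> y \<in> U \<Longrightarrow> \<exists>k. nb y k \<subseteq> U"
    using first_countable_nat_neighbourhoods[OF assms(2)] by blast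
  (* A cell (G, y, V) at node s is a box G \<times> V \<subseteq> W (length s) with a marked point y \<in> V \<subseteq> B;
     its children with label k have their second side inside the k-th neighbourhood of y. *)
  define ok where "ok s c \<longleftrightarrow> openin Y (snd (snd c)) \<and> fst (snd c) \<in> snd (snd c)
      \<and> snd (snd c) \<subseteq> B \<and> fst c \<times> snd (snd c) \<subseteq> W (length s)"
    for s :: "nat list" and c :: "'a set \<times> 'b \<times> 'b set"
  define R where "R k d d' \<longleftrightarrow> snd d' \<subseteq> nb (fst d) k" for k and d d' :: "'b \<times> 'b set"
  obtain x c where x: "x \<in> A" and c: "\<And>s. ok s (c s)" "\<And>s. x \<in> fst (c s)"
    "\<And>s k. R k (snd (c s)) (snd (c (k # s)))"
  proof (rule baire_space_refining_thread[where X=X and A=A and ok=ok and R=R, OF assms(1) A])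
    fix P assume P: "openin X P" "P \<noteq> {}" "P \<subseteq> A"
    obtain G y V where "openin X G" "G \<noteq> {}" "G \<subseteq> P" "openin Y V" "y \<in> V" "V \<subseteq> B" "G \<times> V \<subseteq> W 0"
      using dense_openin_prod_contains_box[OF W(1,2) P(1,2) B] by metis
    then show "\<exists>G d. openin X G \<and> G \<noteq> {} \<and> G \<subseteq> P \<and> ok [] (G, d)"
      unfolding ok_def by (intro exI[of _ G] exI[of _ "(y, V)"]) simp
  next
    fix s k C P assume C: "ok s C" and P: "openin X P" "P \<noteq> {}" "P \<subseteq> fst C"
    define yC VC where "yC = fst (snd C)" and "VC = snd (snd C)"
    have "yC \<in> topspace Y"
      using C openin_subset unfolding ok_def yC_def by blast
    then have T: "openin Y (VC \<inter> nb yC k)" "VC \<inter> nb yC k \<noteq> {}"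
      using C nb_open nb_mem unfolding ok_def yC_def VC_def by blast+
    obtain G y V where "openin X G" "G \<noteq> {}" "G \<subseteq> P" "openin Y V" "y \<in> V" "V \<subseteq> VC \<inter> nb yC k"
        "G \<times> V \<subseteq> W (Suc (length s))"
      using dense_openin_prod_contains_box[OF W(1,2) P(1,2) T] by metis
    moreover have "VC \<subseteq> B"
      using C unfolding ok_def VC_def by blast
    ultimately show "\<exists>G d. openin X G \<and> G \<noteq> {} \<and> G \<subseteq> P \<and> ok (k # s) (G, d) \<and> R k (snd C) d"
      unfolding ok_def R_def yC_def by (intro exI[of _ G] exI[of _ "(y, V)"]) auto
  qed (rule that)
  define y V where "y s = fst (snd (c s))" and "V s = snd (snd (c s))" for s
  have cell: "openin Y (V s)" "y s \<in> V s" "V s \<subseteq> B" "fst (c s) \<times> V s \<subseteq> W (length s)" for s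
    using c(1) unfolding ok_def y_def V_def by blast+
  have refine: "\<exists>k. V (k # s) \<subseteq> U" if "openin Y U" "y s \<in> U" for s U
    using nb_base[OF that] c(3) unfolding R_def y_def V_def by blast
  obtain z where z: "\<And>n. \<exists>s. length s = n \<and> z \<in> V s"
    using assms(3) cell(1,2) refine by (rule strong_choquet_beta_unfavorable_tree) (assumption | rule that)+
  have "(x, z) \<in> W n" for n
    using z[of n] c(2) cell(4) by blast
  moreover have "z \<in> B"
    using z[of 0] cell(3) by blast
  ultimately show thesis
    using that x by blast
qed

theorem theorem1p1:
  fixes X :: "'a topology" and Y :: "'b topology"
  assumes "baire_space X"
    and "first_countable Y"
    and "strong_choquet_beta_unfavorable Y"
  shows "baire_space (prod_topology X Y)"
proof (rule baire_spaceI)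
  fix W :: "nat \<Rightarrow> ('a \<times> 'b) set" and T
  assume W: "\<And>n. openin (prod_topology X Y) (W n)"
    "\<And>n. prod_topology X Y closure_of W n = topspace (prod_topology X Y)"
    and T: "openin (prod_topology X Y) T" "T \<noteq> {}"
  then obtain a b where "(a, b) \<in> T"
    by auto
  then obtain A B where AB: "openin X A" "openin Y B" "a \<in> A" "b \<in> B" "A \<times> B \<subseteq> T"
    using T(1) openin_prod_topology_alt by metis
  moreover have "A \<noteq> {}" "B \<noteq> {}"
    using AB(3,4) by auto
  ultimately obtain x z where "x \<in> A" "z \<in> B" "\<And>n. (x, z) \<in> W n"
    using prod_meets_Inter_dense_open[where W=W, OF assms W] by metis
  then show "\<exists>p\<in>T. \<forall>n. p \<in> W n"
    using AB(5) by blast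
qed

end
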